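(* Let $(A,\gamma)$ be a quasiordered set, $(X,\rho)$ a partially ordered set, and $f:A\to X$ a map such that for all $x,y\in A$, $(x,y)\in\gamma$ if and only if $(f(x),f(y))\in\rho$. Let $(X_1^{(i)})_{i\in I}$ be subsets of $X$ with $\gamma\cap\ker(f)\subseteq\ker_{X_1^{(i)}}(f)$ for all $i\in I$, and let $\{R_i\mid i\in I\}$ be linear extensions of $\rho$ with $\bigcap_{i\in I}R_i=\rho$. Then $$\bigcap_{i\in I}\bigl(\ker_{X_1^{(i)}}(f)\cup f^{-1}(R_i)\bigr)=\gamma,$$ and each $\ker_{X_1^{(i)}}(f)\cup f^{-1}(R_i)$ is a half-space on $A$. In particular, if $\kappa:A\to A/(\gamma\cap\gamma^{-1})$ is the canonical surjection and $\{R_i\mid i\in I\}$ are linear extensions of $r_\gamma$ with $\bigcap_{i\in I}R_i=r_\gamma$, then $\bigcap_{i\in I}\bigl((\gamma\cap\gamma^{-1})\cup\kappa^{-1}(R_i)\bigr)=\gamma$.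
   Context: A quasiorder on $A$ is a reflexive and transitive relation; $\Delta_A=\{(a,a)\mid a\in A\}$. A quasiorder $\alpha$ on $A$ is a half-space if there is a quasiorder $\beta$ on $A$ with $\alpha\cup\beta=A\times A$ and $\alpha\cap\beta=\Delta_A$. For $f:A\to X$, $X_1\subseteq X$ and a linear order $R$ on $X$ (strict part $<_R$): $\ker(f)=\{(a,b)\mid f(a)=f(b)\}$, $\ker_{X_1}(f)=\Delta_A\cup\{(a,b)\mid f(a)=f(b)\in X_1\}$, $f^{-1}(R)=\Delta_A\cup\{(a,b)\mid f(a)<_Rf(b)\}$. For a quasiorder $\gamma$, $r_\gamma$ is the induced partial order on $A/(\gamma\cap\gamma^{-1})$: $([a],[b])\in r_\gamma$ iff $(a,b)\in\gamma$. *)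

theory Defs
  imports Main
begin

text \<open>Quasiorders/partial orders/linear orders on the whole carrier type use the library
  notions preorder_on UNIV, partial_order_on UNIV, linear_order_on UNIV. Delta_A is Id.\<close>

definition half_space :: "'a rel \<Rightarrow> bool" where
  "half_space \<alpha> \<longleftrightarrow> preorder_on UNIV \<alpha> \<and>
     (\<exists>\<beta>. preorder_on UNIV \<beta> \<and> \<alpha> \<union> \<beta> = UNIV \<and> \<alpha> \<inter> \<beta> = Id)"

definition kerf :: "('a \<Rightarrow> 'b) \<Rightarrow> 'a rel" where
  "kerf f = {(a, b). f a = f b}"

definition ker_on :: "'b set \<Rightarrow> ('a \<Rightarrow> 'b) \<Rightarrow> 'a rel" where
  "ker_on X1 f = Id \<union> {(a, b). f a = f b \<and> f a \<in> X1}"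

definition preim :: "('a \<Rightarrow> 'b) \<Rightarrow> 'b rel \<Rightarrow> 'a rel" where
  "preim f R = Id \<union> {(a, b). (f a, f b) \<in> R \<and> f a \<noteq> f b}"

definition canon :: "'a rel \<Rightarrow> 'a \<Rightarrow> 'a set" where
  "canon \<gamma> a = (\<gamma> \<inter> \<gamma>\<inverse>) `` {a}"

definition induced_order :: "'a rel \<Rightarrow> 'a set rel" where
  "induced_order \<gamma> = {(canon \<gamma> a, canon \<gamma> b) | a b. (a, b) \<in> \<gamma>}"

end

theory Submission
  imports Defs
begin

text \<open>For a relation R that is reflexive on the image of f, kerf f \<union> preim f R is simply the
  inverse image of R under f, and the kernel hypothesis forces ker_on (X1 i) f = kerf f.
  So the i-th relation is the inverse image of R i, the intersection is the inverse image of
  \<Inter>R i = \<rho>, which is \<gamma>; and the inverse image of a linear order R is a half-space,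
  complemented by the inverse image of the strict reverse of R plus the diagonal. The quotient
  statement is the same computation for the canonical surjection, whose kernel is
  \<gamma> \<inter> \<gamma>\<inverse> and under which \<gamma> is the inverse image of the induced order.\<close>

lemma ker_on_subset_kerf: "ker_on X1 f \<subseteq> kerf f"
  unfolding ker_on_def kerf_def by auto

lemma kerf_Un_preim:
  assumes "\<And>a. (f a, f a) \<in> R"
  shows "kerf f \<union> preim f R = inv_image R f"
  using assms unfolding kerf_def preim_def inv_image_def by auto

lemma preorder_on_inv_image:
  "preorder_on UNIV R \<Longrightarrow> preorder_on UNIV (inv_image R f)"
  unfolding preorder_on_def refl_on_def by (auto intro: trans_inv_image)

lemma preorder_on_preim:
  assumes "partial_order_on UNIV R"
  shows "preorder_on UNIV (preim f R)"
proof -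
  have trans: "trans R" and antisym: "antisym R"
    using assms by (auto simp: partial_order_on_def preorder_on_def)
  have "trans (preim f R)"
  proof (rule transI)
    fix a b c assume "(a, b) \<in> preim f R" "(b, c) \<in> preim f R"
    then show "(a, c) \<in> preim f R"
      unfolding preim_def using transD[OF trans] antisymD[OF antisym] by auto
  qed
  then show ?thesis
    unfolding preorder_on_def refl_on_def preim_def by auto
qed

lemma half_space_inv_image:
  assumes "linear_order_on UNIV R"
  shows "half_space (inv_image R f)"
  unfolding half_space_def
proof (intro conjI exI)
  have po: "partial_order_on UNIV R" and total: "total R"
    using assms by (auto simp: linear_order_on_def)
  then have refl: "refl R" and antisym: "antisym R"
    by (simp_all add: partial_order_on_def preorder_on_def)
  show "preorder_on UNIV (inv_image R f)"
    using po by (simp add: partial_order_on_def preorder_on_inv_image)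
  show "preorder_on UNIV (preim f (R\<inverse>))"
    using po by (simp add: preorder_on_preim)
  show "inv_image R f \<union> preim f (R\<inverse>) = UNIV"
    using total refl unfolding preim_def total_on_def refl_on_def by (auto; metis)
  show "inv_image R f \<inter> preim f (R\<inverse>) = Id"
    using antisymD[OF antisym] refl unfolding preim_def refl_on_def by auto
qed

lemma equiv_Int_converse: "preorder_on UNIV \<gamma> \<Longrightarrow> equiv UNIV (\<gamma> \<inter> \<gamma>\<inverse>)"
  unfolding preorder_on_def equiv_def refl_on_def sym_def by (auto intro: trans_Int)

lemma canon_eq_iff:
  assumes "preorder_on UNIV \<gamma>"
  shows "canon \<gamma> a = canon \<gamma> b \<longleftrightarrow> (a, b) \<in> \<gamma> \<and> (b, a) \<in> \<gamma>"
  using eq_equiv_class_iff[OF equiv_Int_converse[OF assms]] unfolding canon_def by auto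

lemma kerf_canon: "preorder_on UNIV \<gamma> \<Longrightarrow> kerf (canon \<gamma>) = \<gamma> \<inter> \<gamma>\<inverse>"
  unfolding kerf_def by (auto simp: canon_eq_iff)

lemma range_canon: "range (canon \<gamma>) = UNIV // (\<gamma> \<inter> \<gamma>\<inverse>)"
  unfolding canon_def quotient_def by auto

lemma inv_image_induced_order:
  assumes "preorder_on UNIV \<gamma>"
  shows "inv_image (induced_order \<gamma>) (canon \<gamma>) = \<gamma>"
proof -
  have "(a, b) \<in> \<gamma>" if "canon \<gamma> a = canon \<gamma> a'" "canon \<gamma> b = canon \<gamma> b'" "(a', b') \<in> \<gamma>"
    for a b a' b'
    using that canon_eq_iff[OF assms] assms
    unfolding preorder_on_def by (meson transD)
  then show ?thesis
    unfolding induced_order_def inv_image_def by blast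
qed

lemma INT_Int_converse_Un_preim_canon:
  assumes "preorder_on UNIV \<gamma>"
    and "\<And>j. j \<in> J \<Longrightarrow> refl_on (UNIV // (\<gamma> \<inter> \<gamma>\<inverse>)) (S j)"
    and "((UNIV // (\<gamma> \<inter> \<gamma>\<inverse>)) \<times> (UNIV // (\<gamma> \<inter> \<gamma>\<inverse>))) \<inter> (\<Inter>j\<in>J. S j)
      = induced_order \<gamma>"
  shows "(\<Inter>j\<in>J. (\<gamma> \<inter> \<gamma>\<inverse>) \<union> preim (canon \<gamma>) (S j)) = \<gamma>"
proof -
  have "(\<gamma> \<inter> \<gamma>\<inverse>) \<union> preim (canon \<gamma>) (S j) = inv_image (S j) (canon \<gamma>)" if "j \<in> J" for j
    using assms(2)[OF that] range_canon[of \<gamma>]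
    by (subst kerf_canon[OF assms(1), symmetric], intro kerf_Un_preim) (auto simp: refl_on_def)
  then have "(\<Inter>j\<in>J. (\<gamma> \<inter> \<gamma>\<inverse>) \<union> preim (canon \<gamma>) (S j))
      = inv_image ((UNIV // (\<gamma> \<inter> \<gamma>\<inverse>)) \<times> (UNIV // (\<gamma> \<inter> \<gamma>\<inverse>)) \<inter> (\<Inter>j\<in>J. S j)) (canon \<gamma>)"
    by (auto simp flip: range_canon)
  also have "\<dots> = \<gamma>"
    by (simp add: assms(3) inv_image_induced_order[OF assms(1)])
  finally show ?thesis .
qed

theorem proposition2p8:
  fixes \<gamma> :: "'a rel" and \<rho> :: "'b rel" and f :: "'a \<Rightarrow> 'b"
    and I :: "'i set" and X1 :: "'i \<Rightarrow> 'b set" and R :: "'i \<Rightarrow> 'b rel"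
  assumes "preorder_on UNIV \<gamma>"
    and "partial_order_on UNIV \<rho>"
    and "\<And>x y. (x, y) \<in> \<gamma> \<longleftrightarrow> (f x, f y) \<in> \<rho>"
    and "\<And>i. i \<in> I \<Longrightarrow> \<gamma> \<inter> kerf f \<subseteq> ker_on (X1 i) f"
    and "\<And>i. i \<in> I \<Longrightarrow> linear_order_on UNIV (R i) \<and> \<rho> \<subseteq> R i"
    and "(\<Inter>i\<in>I. R i) = \<rho>"
  shows "(\<Inter>i\<in>I. ker_on (X1 i) f \<union> preim f (R i)) = \<gamma>
    \<and> (\<forall>i\<in>I. half_space (ker_on (X1 i) f \<union> preim f (R i)))
    \<and> (\<forall>(J :: 'j set) (S :: 'j \<Rightarrow> 'a set rel).
         (\<forall>j\<in>J. linear_order_on (UNIV // (\<gamma> \<inter> \<gamma>\<inverse>)) (S j) \<and> induced_order \<gamma> \<subseteq> S j)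
         \<and> ((UNIV // (\<gamma> \<inter> \<gamma>\<inverse>)) \<times> (UNIV // (\<gamma> \<inter> \<gamma>\<inverse>))) \<inter> (\<Inter>j\<in>J. S j) = induced_order \<gamma>
       \<longrightarrow> (\<Inter>j\<in>J. (\<gamma> \<inter> \<gamma>\<inverse>) \<union> preim (canon \<gamma>) (S j)) = \<gamma>)"
proof -
  have \<gamma>: "\<gamma> = inv_image \<rho> f"
    using assms(3) by auto
  have "kerf f \<subseteq> \<gamma>"
    using assms(2) unfolding \<gamma> kerf_def partial_order_on_def preorder_on_def refl_on_def by auto
  then have "ker_on (X1 i) f = kerf f" if "i \<in> I" for i
    using assms(4)[OF that] ker_on_subset_kerf by blast
  moreover have "\<And>i a. i \<in> I \<Longrightarrow> (f a, f a) \<in> R i"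
    using assms(5) by (auto simp: linear_order_on_def partial_order_on_def preorder_on_def refl_on_def)
  ultimately have ith: "ker_on (X1 i) f \<union> preim f (R i) = inv_image (R i) f" if "i \<in> I" for i
    using that by (simp add: kerf_Un_preim)
  have "(\<Inter>i\<in>I. inv_image (R i) f) = inv_image \<rho> f"
    using assms(6) by auto
  then show ?thesis
  proof (intro conjI ballI allI impI)
    show "half_space (ker_on (X1 i) f \<union> preim f (R i))" if "i \<in> I" for i
      using assms(5)[OF that] by (simp add: ith[OF that] half_space_inv_image)
    show "(\<Inter>j\<in>J. (\<gamma> \<inter> \<gamma>\<inverse>) \<union> preim (canon \<gamma>) (S j)) = \<gamma>"
      if "(\<forall>j\<in>J. linear_order_on (UNIV // (\<gamma> \<inter> \<gamma>\<inverse>)) (S j) \<and> induced_order \<gamma> \<subseteq> S j)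
        \<and> ((UNIV // (\<gamma> \<inter> \<gamma>\<inverse>)) \<times> (UNIV // (\<gamma> \<inter> \<gamma>\<inverse>))) \<inter> (\<Inter>j\<in>J. S j) = induced_order \<gamma>"
      for J :: "'j set" and S
      using that assms(1) INT_Int_converse_Un_preim_canon[of \<gamma> J S]
      by (simp add: linear_order_on_def partial_order_on_def preorder_on_def)
  qed (use ith \<gamma> in simp)
qed

end
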